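(* Let $K$ be a $p$-adic field and fix either the semi-algebraic or the subanalytic structure on $K$; "definable" refers to this structure. Let $X\subset K^r$ be a definable set, let $\lambda>0$, and let $f:X\to K$ be a definable $\lambda$-Lipschitz function. Let $X=\bigcup_{i=1}^k X_i$ be a finite covering of $X$ by definable subsets $X_i$, and put $f_i=f|_{X_i}$. Suppose that for each $i$, $f_i$ extends to a definable $\Lambda_i$-Lipschitz map $\tilde f_i:K^r\to K$, where $\Lambda_i\ge\lambda$. Then $f$ extends to a definable $\Lambda$-Lipschitz map $\tilde f:K^r\to K$, where $\Lambda=\max_i\Lambda_i$.
   Context: $K$ is a finite field extension of $\mathbb{Q}_p$, with valuation $\mathrm{ord}$, residue field of cardinality $q$, and norm $|x|=q^{-\mathrm{ord}(x)}$ (with $|0|=0$); $K^n$ carries the max-norm $|(x_1,\dots,x_n)|=\max_i|x_i|$. Definable means definable (with parameters) in the semi-algebraic structure (the field language on $K$) or in the subanalytic structure (the field language expanded by restricted analytic functions, i.e. functions on $\mathcal{O}_K^n$ given by convergent power series, extended by zero outside $\mathcal{O}_K^n$). A function $g:A\to K^s$ with $A\subset K^n$ is $\lambda$-Lipschitz if $|g(a)-g(b)|\le\lambda|a-b|$ for all $a,b\in A$. *)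

theory Defs
  imports Complex_Main
begin

text \<open>A p-adic field (finite extension of Q_p) is encoded as a field of characteristic 0
  carrying a normalized discrete valuation ord (ord 0 is irrelevant), which is complete
  for the associated absolute value and whose residue field is finite of cardinality q.
  These are exactly the finite extensions of the p-adic numbers, with q = card of the
  residue field and |x| = q^(-ord x).\<close>

definition padic_abs :: "('k::field \<Rightarrow> int) \<Rightarrow> nat \<Rightarrow> 'k \<Rightarrow> real" where
  "padic_abs ord q x = (if x = 0 then 0 else real q powr (- real_of_int (ord x)))"

definition val_ring :: "('k::field \<Rightarrow> int) \<Rightarrow> 'k set" where
  "val_ring ord = {x. x = 0 \<or> ord x \<ge> 0}"

definition max_ideal :: "('k::field \<Rightarrow> int) \<Rightarrow> 'k set" where
  "max_ideal ord = {x. x = 0 \<or> ord x > 0}"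

definition residue_field :: "('k::field \<Rightarrow> int) \<Rightarrow> 'k set set" where
  "residue_field ord = (\<lambda>x. {y \<in> val_ring ord. x - y \<in> max_ideal ord}) ` val_ring ord"

definition p_adic_field :: "('k::field_char_0 \<Rightarrow> int) \<Rightarrow> nat \<Rightarrow> bool" where
  "p_adic_field ord q \<longleftrightarrow>
     (\<forall>x y. x \<noteq> 0 \<longrightarrow> y \<noteq> 0 \<longrightarrow> ord (x * y) = ord x + ord y) \<and>
     (\<forall>x y. x \<noteq> 0 \<longrightarrow> y \<noteq> 0 \<longrightarrow> x + y \<noteq> 0 \<longrightarrow> ord (x + y) \<ge> min (ord x) (ord y)) \<and>
     (\<exists>\<pi>. \<pi> \<noteq> 0 \<and> ord \<pi> = 1) \<and>
     finite (residue_field ord) \<and> card (residue_field ord) = q \<and>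
     (\<forall>s :: nat \<Rightarrow> 'k.
        (\<forall>e>0. \<exists>N. \<forall>m\<ge>N. \<forall>n\<ge>N. padic_abs ord q (s m - s n) < e) \<longrightarrow>
        (\<exists>l. \<forall>e>0. \<exists>N. \<forall>n\<ge>N. padic_abs ord q (s n - l) < e))"

definition vec_abs :: "('k::field \<Rightarrow> int) \<Rightarrow> nat \<Rightarrow> 'k list \<Rightarrow> real" where
  "vec_abs ord q xs = Max (insert 0 (padic_abs ord q ` set xs))"

definition vec_diff :: "'k::field list \<Rightarrow> 'k list \<Rightarrow> 'k list" where
  "vec_diff xs ys = map2 (-) xs ys"

definition kspace :: "nat \<Rightarrow> 'k list set" where
  "kspace n = {xs. length xs = n}"

definition lipschitz_on :: "('k::field \<Rightarrow> int) \<Rightarrow> nat \<Rightarrow> 'k list set \<Rightarrow> ('k list \<Rightarrow> 'k) \<Rightarrow> real \<Rightarrow> bool" where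
  "lipschitz_on ord q A g lam \<longleftrightarrow>
     (\<forall>a\<in>A. \<forall>b\<in>A. padic_abs ord q (g a - g b) \<le> lam * vec_abs ord q (vec_diff a b))"

definition restricted_series :: "('k::field \<Rightarrow> int) \<Rightarrow> nat \<Rightarrow> nat \<Rightarrow> (nat list \<Rightarrow> 'k) \<Rightarrow> bool" where
  "restricted_series ord q n a \<longleftrightarrow>
     (\<forall>e>0. finite {I. length I = n \<and> padic_abs ord q (a I) \<ge> e})"

definition partial_sum :: "nat \<Rightarrow> (nat list \<Rightarrow> 'k::field) \<Rightarrow> 'k list \<Rightarrow> nat \<Rightarrow> 'k" where
  "partial_sum n a xs N =
     (\<Sum>I\<in>{I. length I = n \<and> sum_list I \<le> N}. a I * prod_list (map2 (\<lambda>x i. x ^ i) xs I))"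

definition series_value :: "('k::field \<Rightarrow> int) \<Rightarrow> nat \<Rightarrow> nat \<Rightarrow> (nat list \<Rightarrow> 'k) \<Rightarrow> 'k list \<Rightarrow> 'k" where
  "series_value ord q n a xs =
     (THE s. \<forall>e>0. \<exists>N. \<forall>M\<ge>N. padic_abs ord q (partial_sum n a xs M - s) < e)"

definition restricted_fun :: "('k::field \<Rightarrow> int) \<Rightarrow> nat \<Rightarrow> nat \<Rightarrow> (nat list \<Rightarrow> 'k) \<Rightarrow> 'k list \<Rightarrow> 'k" where
  "restricted_fun ord q n a xs =
     (if length xs = n \<and> (\<forall>x\<in>set xs. x \<in> val_ring ord) then series_value ord q n a xs else 0)"

datatype 'k trm =
    Var nat
  | Cst 'k
  | Add "'k trm" "'k trm"
  | Mul "'k trm" "'k trm"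
  | Neg "'k trm"
  | RAn nat "nat list \<Rightarrow> 'k" "'k trm list"

datatype 'k fml =
    FEq "'k trm" "'k trm"
  | FNot "'k fml"
  | FAnd "'k fml" "'k fml"
  | FEx nat "'k fml"

fun eval_trm :: "('k::field \<Rightarrow> int) \<Rightarrow> nat \<Rightarrow> (nat \<Rightarrow> 'k) \<Rightarrow> 'k trm \<Rightarrow> 'k" where
  "eval_trm ord q env (Var i) = env i"
| "eval_trm ord q env (Cst c) = c"
| "eval_trm ord q env (Add s t) = eval_trm ord q env s + eval_trm ord q env t"
| "eval_trm ord q env (Mul s t) = eval_trm ord q env s * eval_trm ord q env t"
| "eval_trm ord q env (Neg s) = - eval_trm ord q env s"
| "eval_trm ord q env (RAn n a ts) = restricted_fun ord q n a (map (eval_trm ord q env) ts)"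

text \<open>Well-formed terms: if an = False (semi-algebraic structure) no analytic symbols are
  allowed; if an = True (subanalytic structure) analytic symbols must be restricted power
  series applied to the right number of arguments.\<close>
fun wf_trm :: "bool \<Rightarrow> ('k::field \<Rightarrow> int) \<Rightarrow> nat \<Rightarrow> 'k trm \<Rightarrow> bool" where
  "wf_trm an ord q (Var i) = True"
| "wf_trm an ord q (Cst c) = True"
| "wf_trm an ord q (Add s t) = (wf_trm an ord q s \<and> wf_trm an ord q t)"
| "wf_trm an ord q (Mul s t) = (wf_trm an ord q s \<and> wf_trm an ord q t)"
| "wf_trm an ord q (Neg s) = wf_trm an ord q s"
| "wf_trm an ord q (RAn n a ts) =
     (an \<and> restricted_series ord q n a \<and> length ts = n \<and> (\<forall>t\<in>set ts. wf_trm an ord q t))"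

fun wf_fml :: "bool \<Rightarrow> ('k::field \<Rightarrow> int) \<Rightarrow> nat \<Rightarrow> 'k fml \<Rightarrow> bool" where
  "wf_fml an ord q (FEq s t) = (wf_trm an ord q s \<and> wf_trm an ord q t)"
| "wf_fml an ord q (FNot p) = wf_fml an ord q p"
| "wf_fml an ord q (FAnd p r) = (wf_fml an ord q p \<and> wf_fml an ord q r)"
| "wf_fml an ord q (FEx v p) = wf_fml an ord q p"

fun sat :: "('k::field \<Rightarrow> int) \<Rightarrow> nat \<Rightarrow> (nat \<Rightarrow> 'k) \<Rightarrow> 'k fml \<Rightarrow> bool" where
  "sat ord q env (FEq s t) = (eval_trm ord q env s = eval_trm ord q env t)"
| "sat ord q env (FNot p) = (\<not> sat ord q env p)"
| "sat ord q env (FAnd p r) = (sat ord q env p \<and> sat ord q env r)"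
| "sat ord q env (FEx v p) = (\<exists>x. sat ord q (env(v := x)) p)"

definition list_env :: "'k::field list \<Rightarrow> nat \<Rightarrow> 'k" where
  "list_env xs i = (if i < length xs then xs ! i else 0)"

text \<open>Definable subsets of K^n (with parameters, which appear as constants Cst).\<close>
definition definable_set :: "bool \<Rightarrow> ('k::field \<Rightarrow> int) \<Rightarrow> nat \<Rightarrow> nat \<Rightarrow> 'k list set \<Rightarrow> bool" where
  "definable_set an ord q n X \<longleftrightarrow>
     (\<exists>\<phi>. wf_fml an ord q \<phi> \<and> X = {xs \<in> kspace n. sat ord q (list_env xs) \<phi>})"

definition definable_fun :: "bool \<Rightarrow> ('k::field \<Rightarrow> int) \<Rightarrow> nat \<Rightarrow> nat \<Rightarrow> 'k list set \<Rightarrow> ('k list \<Rightarrow> 'k) \<Rightarrow> bool" where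
  "definable_fun an ord q n A g \<longleftrightarrow>
     definable_set an ord q n A \<and> definable_set an ord q (Suc n) ((\<lambda>xs. xs @ [g xs]) ` A)"

end

theory Submission
  imports Defs
begin

text \<open>For each point \<open>x\<close> let \<open>i(x)\<close> be the least index with \<open>d(x, X\<^sub>i) \<le> d(x, X\<^sub>m)\<close> for all
  \<open>m\<close>, and put \<open>F(x) = f\<^sub>i\<^sub>(\<^sub>x\<^sub>)(x)\<close>. On \<open>X\<close> this is \<open>f\<close>, since \<open>d(x, X\<^sub>i\<^sub>(\<^sub>x\<^sub>)) = 0\<close> forces
  \<open>x \<in> X\<^sub>i\<^sub>(\<^sub>x\<^sub>)\<close>. If \<open>i(a) \<noteq> i(b)\<close>, some \<open>a' \<in> X\<^sub>i\<^sub>(\<^sub>a\<^sub>)\<close> satisfies \<open>|a - a'| \<le> |a - b|\<close>: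
  otherwise every \<open>X\<^sub>m\<close> keeps farther than \<open>|a - b|\<close> from \<open>a\<close>, so in the ultrametric \<open>K\<^sup>r\<close>
  the point \<open>b\<close> sees each \<open>X\<^sub>m\<close> at the same distances as \<open>a\<close> and \<open>i(b) = i(a)\<close>. Choosing
  \<open>b'\<close> likewise, each step of \<open>F(a), f(a'), f(b'), F(b)\<close> is bounded by \<open>\<Lambda> |a - b|\<close>, hence
  so is \<open>|F(a) - F(b)|\<close>.
  \<open>F\<close> is definable because \<open>|x| \<le> |y|\<close> is: by Hensel's lemma, for a uniformiser \<open>\<pi>\<close> and
  \<open>n \<in> {2, 3}\<close> a unit, \<open>x\<close> is integral iff \<open>1 + \<pi> x\<^sup>n\<close> is an \<open>n\<close>-th power.\<close>

definition definable_pred :: "bool \<Rightarrow> ('k::field \<Rightarrow> int) \<Rightarrow> nat \<Rightarrow> ((nat \<Rightarrow> 'k) \<Rightarrow> bool) \<Rightarrow> bool" where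
  "definable_pred an ord q P \<longleftrightarrow> (\<exists>\<phi>. wf_fml an ord q \<phi> \<and> (\<forall>e. sat ord q e \<phi> = P e))"

lemma definable_pred_cong:
  "definable_pred an ord q P \<Longrightarrow> (\<And>e. P e = Q e) \<Longrightarrow> definable_pred an ord q Q"
  unfolding definable_pred_def by metis

lemma definable_pred_not: "definable_pred an ord q P \<Longrightarrow> definable_pred an ord q (\<lambda>e. \<not> P e)"
  unfolding definable_pred_def by (metis sat.simps(2) wf_fml.simps(2))

lemma definable_pred_conj:
  "definable_pred an ord q P \<Longrightarrow> definable_pred an ord q Q \<Longrightarrow> definable_pred an ord q (\<lambda>e. P e \<and> Q e)"
  unfolding definable_pred_def by (metis sat.simps(3) wf_fml.simps(3))

lemma definable_pred_disj:
  "definable_pred an ord q P \<Longrightarrow> definable_pred an ord q Q \<Longrightarrow> definable_pred an ord q (\<lambda>e. P e \<or> Q e)"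
  using definable_pred_not[OF definable_pred_conj[OF definable_pred_not definable_pred_not], of an ord q P Q]
  by (simp add: definable_pred_cong)

lemma definable_pred_imp:
  "definable_pred an ord q P \<Longrightarrow> definable_pred an ord q Q \<Longrightarrow> definable_pred an ord q (\<lambda>e. P e \<longrightarrow> Q e)"
  using definable_pred_disj[OF definable_pred_not, of an ord q P Q] by (simp add: definable_pred_cong)

lemma definable_pred_ex:
  assumes "definable_pred an ord q P"
  shows "definable_pred an ord q (\<lambda>e. \<exists>x. P (e(v := x)))"
proof -
  obtain \<phi> where "wf_fml an ord q \<phi>" "\<forall>e. sat ord q e \<phi> = P e"
    using assms unfolding definable_pred_def by blast
  then show ?thesis unfolding definable_pred_def by (intro exI[of _ "FEx v \<phi>"]) simp
qed

lemma definable_pred_const: "definable_pred an ord q (\<lambda>e. b)"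
proof -
  have "definable_pred an ord q (\<lambda>e. True)"
    unfolding definable_pred_def by (intro exI[of _ "FEq (Cst 0) (Cst 0)"]) simp
  then show ?thesis by (cases b) (use definable_pred_not in fastforce)+
qed

lemma definable_pred_all_less:
  "(\<And>i. i < (n::nat) \<Longrightarrow> definable_pred an ord q (P i)) \<Longrightarrow> definable_pred an ord q (\<lambda>e. \<forall>i<n. P i e)"
proof (induction n)
  case 0 then show ?case using definable_pred_const[of an ord q True] by simp
next
  case (Suc n)
  have "definable_pred an ord q (\<lambda>e. (\<forall>i<n. P i e) \<and> P n e)"
    using Suc by (intro definable_pred_conj) auto
  then show ?case by (rule definable_pred_cong) (auto simp: less_Suc_eq)
qed

lemma definable_pred_ex_less:
  "(\<And>i. i < (n::nat) \<Longrightarrow> definable_pred an ord q (P i)) \<Longrightarrow> definable_pred an ord q (\<lambda>e. \<exists>i<n. P i e)"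
proof (induction n)
  case 0 then show ?case using definable_pred_const[of an ord q False] by simp
next
  case (Suc n)
  have "definable_pred an ord q (\<lambda>e. (\<exists>i<n. P i e) \<or> P n e)"
    using Suc by (intro definable_pred_disj) auto
  then show ?case by (rule definable_pred_cong) (auto simp: less_Suc_eq)
qed

fun trm_vars :: "'k trm \<Rightarrow> nat set" where
  "trm_vars (Var i) = {i}"
| "trm_vars (Cst c) = {}"
| "trm_vars (Add s t) = trm_vars s \<union> trm_vars t"
| "trm_vars (Mul s t) = trm_vars s \<union> trm_vars t"
| "trm_vars (Neg s) = trm_vars s"
| "trm_vars (RAn n a ts) = (\<Union>t\<in>set ts. trm_vars t)"

fun subst_trm :: "(nat \<Rightarrow> 'k trm) \<Rightarrow> 'k trm \<Rightarrow> 'k trm" where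
  "subst_trm s (Var i) = s i"
| "subst_trm s (Cst c) = Cst c"
| "subst_trm s (Add a b) = Add (subst_trm s a) (subst_trm s b)"
| "subst_trm s (Mul a b) = Mul (subst_trm s a) (subst_trm s b)"
| "subst_trm s (Neg a) = Neg (subst_trm s a)"
| "subst_trm s (RAn n a ts) = RAn n a (map (subst_trm s) ts)"

text \<open>Bound variables are renamed to \<open>N, N + 1, \<dots>\<close>; this avoids capture as long as the
  substituted terms only use variables below \<open>N\<close>.\<close>
fun subst_fml :: "nat \<Rightarrow> (nat \<Rightarrow> 'k trm) \<Rightarrow> 'k fml \<Rightarrow> 'k fml" where
  "subst_fml N s (FEq a b) = FEq (subst_trm s a) (subst_trm s b)"
| "subst_fml N s (FNot p) = FNot (subst_fml N s p)"
| "subst_fml N s (FAnd p r) = FAnd (subst_fml N s p) (subst_fml N s r)"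
| "subst_fml N s (FEx v p) = FEx N (subst_fml (Suc N) (s(v := Var N)) p)"

lemma eval_trm_cong:
  "(\<And>j. j \<in> trm_vars t \<Longrightarrow> e j = e' j) \<Longrightarrow> eval_trm ord q e t = eval_trm ord q e' t"
proof (induction t)
  case (RAn n a ts)
  then show ?case by (auto intro!: arg_cong[where f="restricted_fun ord q n a"] map_cong)
qed auto

lemma eval_subst_trm:
  "eval_trm ord q e (subst_trm s t) = eval_trm ord q (\<lambda>i. eval_trm ord q e (s i)) t"
proof (induction t)
  case (RAn n a ts)
  then show ?case by (auto intro!: arg_cong[where f="restricted_fun ord q n a"] map_cong)
qed auto

lemma wf_subst_trm:
  "wf_trm an ord q t \<Longrightarrow> (\<And>i. wf_trm an ord q (s i)) \<Longrightarrow> wf_trm an ord q (subst_trm s t)"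
  by (induction t) auto

lemma wf_subst_fml:
  "wf_fml an ord q \<phi> \<Longrightarrow> (\<And>i. wf_trm an ord q (s i)) \<Longrightarrow> wf_fml an ord q (subst_fml N s \<phi>)"
  by (induction \<phi> arbitrary: N s) (auto simp: wf_subst_trm)

lemma sat_subst_fml:
  "(\<And>i. trm_vars (s i) \<subseteq> {..<N}) \<Longrightarrow>
   sat ord q e (subst_fml N s \<phi>) = sat ord q (\<lambda>i. eval_trm ord q e (s i)) \<phi>"
proof (induction \<phi> arbitrary: N s e)
  case (FEq a b) then show ?case by (simp add: eval_subst_trm)
next
  case (FNot p) then show ?case by simp
next
  case (FAnd p r) then show ?case by simp
next
  case (FEx v p)
  have vars: "trm_vars ((s(v := Var N)) i) \<subseteq> {..<Suc N}" for i
    using FEx.prems[of i] by (cases "i = v") auto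
  have "eval_trm ord q (e(N := x)) (s i) = eval_trm ord q e (s i)" for x i
    by (rule eval_trm_cong) (use FEx.prems in fastforce)
  then have env: "(\<lambda>i. eval_trm ord q (e(N := x)) ((s(v := Var N)) i))
      = (\<lambda>i. eval_trm ord q e (s i))(v := x)" for x
    by auto
  have "sat ord q (e(N := x)) (subst_fml (Suc N) (s(v := Var N)) p)
      = sat ord q ((\<lambda>i. eval_trm ord q e (s i))(v := x)) p" for x
    by (simp only: FEx.IH[OF vars] env)
  then show ?case by simp
qed

lemma definable_pred_subst:
  assumes "definable_pred an ord q P" "\<And>i. wf_trm an ord q (s i)" "\<And>i. trm_vars (s i) \<subseteq> {..<N}"
  shows "definable_pred an ord q (\<lambda>e. P (\<lambda>i. eval_trm ord q e (s i)))"
proof -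
  obtain \<phi> where "wf_fml an ord q \<phi>" "\<forall>e. sat ord q e \<phi> = P e"
    using assms(1) unfolding definable_pred_def by blast
  then show ?thesis unfolding definable_pred_def
    by (intro exI[of _ "subst_fml N s \<phi>"]) (simp add: wf_subst_fml assms sat_subst_fml)
qed

fun trm_pow :: "'k::one trm \<Rightarrow> nat \<Rightarrow> 'k trm" where
  "trm_pow t 0 = Cst 1"
| "trm_pow t (Suc n) = Mul t (trm_pow t n)"

lemma eval_trm_pow [simp]: "eval_trm ord q e (trm_pow t n) = eval_trm ord q e t ^ n"
  by (induction n) auto

lemma wf_trm_pow [simp]: "wf_trm an ord q t \<Longrightarrow> wf_trm an ord q (trm_pow t n)"
  by (induction n) auto

definition FOr :: "'k fml \<Rightarrow> 'k fml \<Rightarrow> 'k fml" where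
  "FOr a b = FNot (FAnd (FNot a) (FNot b))"

lemma sat_FOr [simp]: "sat ord q e (FOr a b) = (sat ord q e a \<or> sat ord q e b)"
  by (simp add: FOr_def)

lemma wf_FOr [simp]: "wf_fml an ord q (FOr a b) = (wf_fml an ord q a \<and> wf_fml an ord q b)"
  by (simp add: FOr_def)

text \<open>Vectors of \<open>K\<^sup>r\<close> are stored in blocks of \<open>r\<close> consecutive variables.\<close>

definition upd_block :: "(nat \<Rightarrow> 'k) \<Rightarrow> nat \<Rightarrow> 'k list \<Rightarrow> nat \<Rightarrow> 'k" where
  "upd_block e b ys i = (if b \<le> i \<and> i < b + length ys then ys ! (i - b) else e i)"

definition env_block :: "(nat \<Rightarrow> 'k) \<Rightarrow> nat \<Rightarrow> nat \<Rightarrow> 'k list" where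
  "env_block e b r = map (\<lambda>j. e (b + j)) [0..<r]"

lemma length_env_block [simp]: "length (env_block e b r) = r"
  by (simp add: env_block_def)

lemma nth_env_block [simp]: "j < r \<Longrightarrow> env_block e b r ! j = e (b + j)"
  by (simp add: env_block_def)

lemma env_block_Suc: "env_block e b (Suc r) = env_block e b r @ [e (b + r)]"
  by (simp add: env_block_def)

lemma env_block_upd_block: "length ys = r \<Longrightarrow> env_block (upd_block e b ys) b r = ys"
  by (rule nth_equalityI) (auto simp: upd_block_def)

lemma upd_block_Cons: "upd_block e b (y # ys) = upd_block (e(b := y)) (Suc b) ys"
  by (rule ext) (auto simp: upd_block_def nth_Cons' Suc_diff_Suc)

lemma definable_pred_ex_block:
  "definable_pred an ord q P \<Longrightarrow>
   definable_pred an ord q (\<lambda>e. \<exists>ys. length ys = r \<and> P (upd_block e b ys))"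
proof (induction r arbitrary: b)
  case 0
  have "upd_block e b [] = e" for e :: "nat \<Rightarrow> 'a" by (auto simp: upd_block_def fun_eq_iff)
  with 0 show ?case by (simp add: definable_pred_cong)
next
  case (Suc r)
  have "definable_pred an ord q
      (\<lambda>e. \<exists>y. (\<lambda>e. \<exists>ys. length ys = r \<and> P (upd_block e (Suc b) ys)) (e(b := y)))"
    by (rule definable_pred_ex) (rule Suc.IH[OF Suc.prems])
  moreover have "(\<exists>y ys. length ys = r \<and> P (upd_block (e(b := y)) (Suc b) ys)) =
      (\<exists>ys. length ys = Suc r \<and> P (upd_block e b ys))" for e
    by (metis length_Suc_conv upd_block_Cons)
  ultimately show ?case by (simp add: definable_pred_cong)
qed

lemma definable_pred_all_block:
  "definable_pred an ord q P \<Longrightarrow>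
   definable_pred an ord q (\<lambda>e. \<forall>ys. length ys = r \<longrightarrow> P (upd_block e b ys))"
  using definable_pred_not[OF definable_pred_ex_block[OF definable_pred_not, of an ord q P r b]]
  by (rule definable_pred_cong) auto

lemma definable_pred_env_block_mem:
  fixes S :: "'k::field list set"
  assumes "definable_set an ord q r S"
  shows "definable_pred an ord q (\<lambda>e. env_block e b r \<in> S)"
proof -
  obtain \<phi> where \<phi>: "wf_fml an ord q \<phi>" "S = {xs \<in> kspace r. sat ord q (list_env xs) \<phi>}"
    using assms unfolding definable_set_def by blast
  define s :: "nat \<Rightarrow> 'k trm" where "s i = (if i < r then Var (b + i) else Cst 0)" for i
  have "definable_pred an ord q (\<lambda>e. sat ord q e \<phi>)"
    unfolding definable_pred_def using \<phi> by blast
  then have "definable_pred an ord q (\<lambda>e. sat ord q (\<lambda>i. eval_trm ord q e (s i)) \<phi>)"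
    by (rule definable_pred_subst[where N="b + r"]) (auto simp: s_def)
  moreover have "(\<lambda>i. eval_trm ord q e (s i)) = list_env (env_block e b r)" for e
    by (auto simp: s_def list_env_def fun_eq_iff)
  ultimately show ?thesis using \<phi> by (simp add: kspace_def)
qed

lemma definable_set_kspace: "definable_set an ord q r (kspace r)"
  unfolding definable_set_def by (rule exI[of _ "FEq (Cst 0) (Cst 0)"]) (auto simp: kspace_def)

lemma definable_set_graph:
  fixes g :: "'k::field list \<Rightarrow> 'k"
  assumes "definable_pred an ord q (\<lambda>e. e r = g (env_block e 0 r))"
  shows "definable_set an ord q (Suc r) ((\<lambda>xs. xs @ [g xs]) ` kspace r)"
proof -
  obtain \<phi> where \<phi>: "wf_fml an ord q \<phi>" "\<And>e. sat ord q e \<phi> \<longleftrightarrow> e r = g (env_block e 0 r)"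
    using assms unfolding definable_pred_def by blast
  have sat_snoc: "sat ord q (list_env (xs @ [z])) \<phi> \<longleftrightarrow> z = g xs" if "length xs = r" for xs z
  proof -
    have "env_block (list_env (xs @ [z])) 0 r = xs"
      using that by (intro nth_equalityI) (simp_all add: list_env_def nth_append)
    moreover have "list_env (xs @ [z]) r = z" using that by (simp add: list_env_def nth_append)
    ultimately show ?thesis by (simp add: \<phi>(2))
  qed
  have "{w \<in> kspace (Suc r). sat ord q (list_env w) \<phi>} = (\<lambda>xs. xs @ [g xs]) ` kspace r"
  proof (intro equalityI subsetI)
    fix w assume w: "w \<in> {w \<in> kspace (Suc r). sat ord q (list_env w) \<phi>}"
    obtain xs z where xs: "w = xs @ [z]" "length xs = r"
      using w by (cases w rule: rev_cases) (auto simp: kspace_def)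
    then have "z = g xs" using w sat_snoc by simp
    then show "w \<in> (\<lambda>xs. xs @ [g xs]) ` kspace r" using xs by (simp add: kspace_def)
  next
    fix w assume "w \<in> (\<lambda>xs. xs @ [g xs]) ` kspace r"
    then obtain xs where "length xs = r" "w = xs @ [g xs]" by (auto simp: kspace_def)
    then show "w \<in> {w \<in> kspace (Suc r). sat ord q (list_env w) \<phi>}"
      using sat_snoc by (simp add: kspace_def)
  qed
  then show ?thesis unfolding definable_set_def using \<phi>(1) by blast
qed

locale p_adic =
  fixes ord :: "'k::field_char_0 \<Rightarrow> int" and q :: nat
  assumes field_structure: "p_adic_field ord q"
begin

abbreviation pabs where "pabs \<equiv> padic_abs ord q"

lemma ord_mult: "x \<noteq> 0 \<Longrightarrow> y \<noteq> 0 \<Longrightarrow> ord (x * y) = ord x + ord y"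
  using field_structure unfolding p_adic_field_def by blast

lemma ord_add: "x \<noteq> 0 \<Longrightarrow> y \<noteq> 0 \<Longrightarrow> x + y \<noteq> 0 \<Longrightarrow> ord (x + y) \<ge> min (ord x) (ord y)"
  using field_structure unfolding p_adic_field_def by blast

lemma uniformizer_exists: "\<exists>\<pi>. \<pi> \<noteq> 0 \<and> ord \<pi> = 1"
  using field_structure unfolding p_adic_field_def by blast

lemma cauchy_converges: "(\<forall>e>0. \<exists>N. \<forall>m\<ge>N. \<forall>n\<ge>N. pabs ((s :: nat \<Rightarrow> 'k) m - s n) < e) \<Longrightarrow>
        (\<exists>l. \<forall>e>0. \<exists>N. \<forall>n\<ge>N. pabs (s n - l) < e)"
  using field_structure unfolding p_adic_field_def by blast

lemma ord_1 [simp]: "ord 1 = 0"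
  using ord_mult[of 1 1] by simp

lemma ord_minus_1 [simp]: "ord (-1) = 0"
  using ord_mult[of "-1" "-1"] by simp

lemma ord_minus [simp]: "ord (- x) = ord x"
proof (cases "x = 0")
  case False then show ?thesis using ord_mult[of "-1" x] by simp
qed simp

lemma ord_pow: "x \<noteq> 0 \<Longrightarrow> ord (x ^ n) = int n * ord x"
  by (induction n) (auto simp: ord_mult algebra_simps)

lemma ord_of_nat_nonneg: "ord (of_nat n) \<ge> 0" if "n > 0"
  using that
proof (induction n)
  case (Suc n)
  show ?case
  proof (cases "n = 0")
    case False
    have ne: "(of_nat n + 1 :: 'k) \<noteq> 0"
      using of_nat_eq_0_iff[of "Suc n", where 'a='k] by (simp add: add.commute)
    have "ord (of_nat n + 1) \<ge> min (ord (of_nat n)) (ord 1)"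
      using False ne by (intro ord_add) auto
    then show ?thesis using Suc False by (simp add: add.commute)
  qed simp
qed simp

lemma ord_2_or_ord_3: "ord (2::'k) = 0 \<or> ord (3::'k) = 0"
proof -
  have a: "ord (2::'k) \<ge> 0" using ord_of_nat_nonneg[of 2] by simp
  have b: "ord (3::'k) \<ge> 0" using ord_of_nat_nonneg[of 3] by simp
  have "ord (3 + (-2) :: 'k) \<ge> min (ord (3::'k)) (ord (-2::'k))"
    by (rule ord_add) auto
  then have "0 \<ge> min (ord (3::'k)) (ord (2::'k))"
    using ord_minus[of "2::'k"] by simp
  then show ?thesis using a b by linarith
qed

lemma q_ge_2: "q \<ge> 2"
proof -
  have fin: "finite (residue_field ord)" "card (residue_field ord) = q"
    using field_structure unfolding p_adic_field_def by auto
  let ?c = "\<lambda>x. {y \<in> val_ring ord. x - y \<in> max_ideal ord}"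
  have "?c 0 \<in> residue_field ord" "?c 1 \<in> residue_field ord"
    unfolding residue_field_def by (auto simp: val_ring_def)
  moreover have "?c 0 \<noteq> ?c 1"
  proof -
    have "0 \<in> ?c 0" by (auto simp: val_ring_def max_ideal_def)
    moreover have "0 \<notin> ?c 1" by (auto simp: max_ideal_def)
    ultimately show ?thesis by blast
  qed
  ultimately have "card {?c 0, ?c 1} \<le> card (residue_field ord)"
    by (intro card_mono fin) auto
  then show ?thesis using \<open>?c 0 \<noteq> ?c 1\<close> fin by simp
qed

lemma pabs_0 [simp]: "pabs 0 = 0"
  by (simp add: padic_abs_def)

lemma pabs_nonneg [simp]: "pabs x \<ge> 0" by (simp add: padic_abs_def)

lemma pabs_eq_0_iff [simp]: "pabs x = 0 \<longleftrightarrow> x = 0"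
  using q_ge_2 by (simp add: padic_abs_def)

lemma pabs_pos: "x \<noteq> 0 \<Longrightarrow> pabs x > 0"
  using pabs_nonneg[of x] pabs_eq_0_iff[of x] by linarith

lemma pabs_mult: "pabs (x * y) = pabs x * pabs y"
  using q_ge_2 by (auto simp: padic_abs_def ord_mult powr_add[symmetric])

lemma pabs_neg [simp]: "pabs (- x) = pabs x"
  by (simp add: padic_abs_def)

lemma pabs_minus_commute: "pabs (x - y) = pabs (y - x)"
  by (metis pabs_neg minus_diff_eq)

lemma pabs_le_iff_ord: "x \<noteq> 0 \<Longrightarrow> y \<noteq> 0 \<Longrightarrow> pabs x \<le> pabs y \<longleftrightarrow> ord y \<le> ord x"
  using q_ge_2 by (simp add: padic_abs_def)

lemma pabs_add_le_max: "pabs (x + y) \<le> max (pabs x) (pabs y)"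
proof (cases "x = 0 \<or> y = 0 \<or> x + y = 0")
  case True then show ?thesis using pabs_nonneg[of x] by (auto simp: le_max_iff_disj)
next
  case False
  then have "ord (x + y) \<ge> min (ord x) (ord y)" by (intro ord_add) auto
  then show ?thesis using False pabs_le_iff_ord by (cases "ord x \<le> ord y") (auto simp: max_def)
qed

lemma pabs_add_le: "pabs x \<le> M \<Longrightarrow> pabs y \<le> M \<Longrightarrow> pabs (x + y) \<le> M"
  using pabs_add_le_max[of x y] by linarith

lemma pabs_diff_le: "pabs x \<le> M \<Longrightarrow> pabs y \<le> M \<Longrightarrow> pabs (x - y) \<le> M"
  using pabs_add_le[of x M "- y"] by simp

lemma pabs_diff_le_max: "pabs (x - z) \<le> max (pabs (x - y)) (pabs (y - z))"
  using pabs_add_le_max[of "x - y" "y - z"] by simp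

lemma pabs_1 [simp]: "pabs 1 = 1"
  using q_ge_2 by (simp add: padic_abs_def)

lemma pabs_pow: "pabs (x ^ n) = pabs x ^ n"
  by (induction n) (simp_all add: pabs_mult)

lemma pabs_le_1_iff: "pabs x \<le> 1 \<longleftrightarrow> x \<in> val_ring ord"
proof -
  have "real q powr (- real_of_int (ord x)) \<le> real q powr 0 \<longleftrightarrow> - real_of_int (ord x) \<le> 0"
    using q_ge_2 by (intro powr_le_cancel_iff) auto
  then show ?thesis using q_ge_2 by (auto simp: padic_abs_def val_ring_def)
qed

lemma pabs_div: "pabs (x / y) = pabs x / pabs y"
proof (cases "y = 0")
  case False
  have "pabs (x / y) * pabs y = pabs x" using False by (simp flip: pabs_mult)
  then show ?thesis using False pabs_pos[of y] by (simp add: field_simps)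
qed simp

lemma pabs_mult_le:
  assumes "pabs s \<le> c" "pabs w \<le> c" "c < 1"
  shows "pabs (s * w) \<le> c"
proof -
  have "0 \<le> c" using assms(1) pabs_nonneg[of s] by linarith
  then have "pabs s * pabs w \<le> c * 1" using assms by (intro mult_mono) auto
  then show ?thesis by (simp add: pabs_mult)
qed

lemma ord_one_plus:
  assumes "a \<noteq> 0" "ord a < 0"
  shows "1 + a \<noteq> 0 \<and> ord (1 + a) = ord a"
proof -
  have ne: "1 + a \<noteq> 0"
  proof
    assume "1 + a = 0"
    then have "a = -1" by (simp add: eq_neg_iff_add_eq_0 add.commute)
    then show False using assms by simp
  qed
  have "ord (1 + a) \<ge> min (ord 1) (ord a)" using assms ne by (intro ord_add) auto
  moreover have "ord ((1 + a) + (-1)) \<ge> min (ord (1 + a)) (ord (-1))"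
    using assms ne by (intro ord_add) auto
  ultimately show ?thesis using assms ne by auto
qed

lemma geometric_cauchy_converges:
  fixes S :: "nat \<Rightarrow> 'k"
  assumes c: "0 < c" "c < 1" and step: "\<And>n. pabs (S (Suc n) - S n) \<le> c ^ Suc n"
  shows "\<exists>l. \<forall>e>0. \<exists>N. \<forall>n\<ge>N. pabs (S n - l) < e"
proof (rule cauchy_converges, intro allI impI)
  have tail: "pabs (S m - S n) \<le> c ^ Suc n" if "n \<le> m" for m n
    using that
  proof (induction m rule: dec_induct)
    case (step m)
    have "c ^ Suc m \<le> c ^ Suc n" using c step.hyps by (intro power_decreasing) auto
    then show ?case
      using pabs_diff_le_max[of "S (Suc m)" "S n" "S m"] assms(3)[of m] step.IH by linarith
  qed (use c in simp)
  fix e :: real assume "e > 0"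
  obtain N where N: "c ^ N < e" using real_arch_pow_inv[OF \<open>e > 0\<close> c(2)] by blast
  have "pabs (S m - S n) < e" if "m \<ge> N" "n \<ge> N" "n \<le> m" for m n
  proof -
    have "c ^ Suc n \<le> c ^ N" using c that by (intro power_decreasing) auto
    then show ?thesis using tail[OF that(3)] N by linarith
  qed
  then show "\<exists>N. \<forall>m\<ge>N. \<forall>n\<ge>N. pabs (S m - S n) < e"
    by (metis nle_le pabs_minus_commute)
qed

lemma contraction_has_fixpoint:
  fixes g :: "'k \<Rightarrow> 'k"
  assumes c: "0 < c" "c < 1"
    and maps_to: "\<And>s. pabs s \<le> c \<Longrightarrow> pabs (g s) \<le> c"
    and contracts: "\<And>s w. pabs s \<le> c \<Longrightarrow> pabs w \<le> c \<Longrightarrow> pabs (g s - g w) \<le> c * pabs (s - w)"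
  shows "\<exists>s. pabs s \<le> c \<and> g s = s"
proof -
  define S where "S n = (g ^^ n) 0" for n
  have S_Suc: "S (Suc n) = g (S n)" for n by (simp add: S_def)
  have S_bounded: "pabs (S n) \<le> c" for n
    by (induction n) (use c in \<open>simp_all add: S_def maps_to\<close>)
  have "pabs (S (Suc n) - S n) \<le> c ^ Suc n" for n
  proof (induction n)
    case 0 then show ?case using maps_to[of 0] c by (simp add: S_def)
  next
    case (Suc n)
    have "pabs (S (Suc (Suc n)) - S (Suc n)) \<le> c * pabs (S (Suc n) - S n)"
      unfolding S_Suc[of "Suc n"] S_Suc[of n] using S_bounded by (intro contracts) (auto simp flip: S_Suc)
    also have "\<dots> \<le> c * c ^ Suc n" using Suc c by (intro mult_left_mono) auto
    finally show ?case by simp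
  qed
  then obtain l where l: "\<And>e. e > 0 \<Longrightarrow> \<exists>N. \<forall>n\<ge>N. pabs (S n - l) < e"
    using geometric_cauchy_converges[OF c] by blast
  obtain N where N: "pabs (S N - l) < c" using l[OF c(1)] by blast
  have l_bounded: "pabs l \<le> c"
    using pabs_diff_le[OF S_bounded[of N] order.strict_implies_order[OF N]] by simp
  have "pabs (g l - l) < e" if e: "e > 0" for e
  proof -
    obtain N where N: "\<forall>n\<ge>N. pabs (S n - l) < e" using l[OF e] by blast
    have "pabs (g l - S (Suc N)) \<le> c * pabs (l - S N)"
      unfolding S_Suc using l_bounded S_bounded by (intro contracts)
    also have "\<dots> \<le> pabs (S N - l)" using c by (simp add: mult_left_le_one_le pabs_minus_commute)
    also have "\<dots> < e" using N by simp
    finally have "pabs (g l - S (Suc N)) < e" .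
    moreover have "pabs (S (Suc N) - l) < e" using N by simp
    ultimately show ?thesis using pabs_diff_le_max[of "g l" l "S (Suc N)"] by simp
  qed
  then have "pabs (g l - l) \<le> 0" by (meson less_irrefl not_le)
  then have "g l = l" using pabs_nonneg[of "g l - l"] by simp
  then show ?thesis using l_bounded by blast
qed

text \<open>Hensel's lemma for \<open>X\<^sup>2 - (1 + u)\<close> and \<open>X\<^sup>3 - (1 + u)\<close>, in the form of a fixed point
  \<open>s\<close> of \<open>s \<mapsto> (u - s\<^sup>2) / 2\<close>, resp. \<open>s \<mapsto> (u - 3 s\<^sup>2 - s\<^sup>3) / 3\<close>, giving the root \<open>1 + s\<close>.\<close>

lemma square_root_one_plus:
  assumes two: "ord (2::'k) = 0" and u: "pabs u < 1"
  shows "\<exists>y. y ^ 2 = 1 + u"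
proof (cases "u = 0")
  case False
  let ?c = "pabs u"
  have c: "0 < ?c" "?c < 1" using False u pabs_pos by auto
  have pabs_2: "pabs (2::'k) = 1" using two q_ge_2 by (simp add: padic_abs_def)
  define g where "g s = (u - s ^ 2) / 2" for s
  have "\<exists>s. pabs s \<le> ?c \<and> g s = s"
  proof (rule contraction_has_fixpoint[OF c])
    fix s assume "pabs s \<le> ?c"
    then have "pabs (s ^ 2) \<le> ?c" using c by (simp add: power2_eq_square pabs_mult_le)
    then show "pabs (g s) \<le> ?c" by (simp add: g_def pabs_div pabs_2 pabs_diff_le)
  next
    fix s w assume s: "pabs s \<le> ?c" and w: "pabs w \<le> ?c"
    have eq: "g s - g w = (w - s) * (w + s) / 2" by (simp add: g_def field_simps power2_eq_square)
    have "pabs (w + s) \<le> ?c" using s w by (simp add: pabs_add_le)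
    then show "pabs (g s - g w) \<le> ?c * pabs (s - w)"
      unfolding eq pabs_div pabs_mult pabs_2 pabs_minus_commute[of w]
      by (simp add: mult.commute[of "pabs (s - w)"] mult_right_mono)
  qed
  then obtain s where "g s = s" by blast
  then have "(1 + s) ^ 2 = 1 + u" by (simp add: g_def field_simps power2_eq_square)
  then show ?thesis by blast
qed (rule exI[of _ 1], simp)

lemma cube_root_one_plus:
  assumes three: "ord (3::'k) = 0" and u: "pabs u < 1"
  shows "\<exists>y. y ^ 3 = 1 + u"
proof (cases "u = 0")
  case False
  let ?c = "pabs u"
  have c: "0 < ?c" "?c < 1" using False u pabs_pos by auto
  have pabs_3: "pabs (3::'k) = 1" using three q_ge_2 by (simp add: padic_abs_def)
  define g where "g s = (u - 3 * s ^ 2 - s ^ 3) / 3" for s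
  have "\<exists>s. pabs s \<le> ?c \<and> g s = s"
  proof (rule contraction_has_fixpoint[OF c])
    fix s assume s: "pabs s \<le> ?c"
    have s2: "pabs (s * s) \<le> ?c" by (rule pabs_mult_le[OF s s c(2)])
    then have "pabs (3 * s ^ 2) \<le> ?c" "pabs (s ^ 3) \<le> ?c"
      using pabs_mult_le[OF s2 s c(2)] by (simp_all add: power2_eq_square power3_eq_cube pabs_mult pabs_3)
    then show "pabs (g s) \<le> ?c" by (simp add: g_def pabs_div pabs_3 pabs_diff_le)
  next
    fix s w assume s: "pabs s \<le> ?c" and w: "pabs w \<le> ?c"
    have eq: "g s - g w = (w - s) * (3 * (w + s) + (w * w + w * s + s * s)) / 3"
      by (simp add: g_def field_simps power2_eq_square power3_eq_cube)
    have "pabs (3 * (w + s) + (w * w + w * s + s * s)) \<le> ?c"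
      using s w pabs_mult_le[OF w w c(2)] pabs_mult_le[OF w s c(2)] pabs_mult_le[OF s s c(2)]
      by (intro pabs_add_le) (auto simp: pabs_mult pabs_3 intro!: pabs_add_le)
    then show "pabs (g s - g w) \<le> ?c * pabs (s - w)"
      unfolding eq pabs_div pabs_mult pabs_3 pabs_minus_commute[of w]
      by (simp add: mult.commute[of "pabs (s - w)"] mult_right_mono)
  qed
  then obtain s where "g s = s" by blast
  then have "(1 + s) ^ 3 = 1 + u" by (simp add: g_def field_simps power2_eq_square power3_eq_cube)
  then show ?thesis by blast
qed (rule exI[of _ 1], simp)

lemma val_ring_iff_root:
  assumes \<pi>: "\<pi> \<noteq> 0" "ord \<pi> = 1"
    and n: "n = 2 \<and> ord (2::'k) = 0 \<or> n = 3 \<and> ord (3::'k) = 0"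
  shows "x \<in> val_ring ord \<longleftrightarrow> (\<exists>y. y ^ n = 1 + \<pi> * x ^ n)"
proof
  assume "x \<in> val_ring ord"
  then have "pabs (x ^ n) \<le> 1" by (simp flip: pabs_le_1_iff add: pabs_pow power_le_one)
  then have "pabs (\<pi> * x ^ n) \<le> pabs \<pi>" by (simp add: pabs_mult mult_left_le)
  also have "pabs \<pi> < 1" using \<pi> q_ge_2 by (simp add: padic_abs_def)
  finally have "pabs (\<pi> * x ^ n) < 1" .
  then show "\<exists>y. y ^ n = 1 + \<pi> * x ^ n"
    using n square_root_one_plus cube_root_one_plus by blast
next
  assume "\<exists>y. y ^ n = 1 + \<pi> * x ^ n"
  then obtain y where y: "y ^ n = 1 + \<pi> * x ^ n" by blast
  show "x \<in> val_ring ord"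
  proof (rule ccontr)
    assume "x \<notin> val_ring ord"
    then have x: "x \<noteq> 0" "ord x < 0" by (auto simp: val_ring_def)
    have ord_\<pi>x: "ord (\<pi> * x ^ n) = 1 + int n * ord x" using \<pi> x by (simp add: ord_mult ord_pow)
    then have "ord (\<pi> * x ^ n) < 0" using x n by auto
    then have "1 + \<pi> * x ^ n \<noteq> 0" "ord (1 + \<pi> * x ^ n) = 1 + int n * ord x"
      using ord_one_plus[of "\<pi> * x ^ n"] \<pi> x by (auto simp: ord_\<pi>x)
    moreover have "y \<noteq> 0" using y n calculation by auto
    ultimately have "int n * ord y = 1 + int n * ord x" using y by (metis ord_pow)
    then show False using n by (elim disjE; simp; presburger)
  qed
qed


lemma pabs_le_iff_integral_quotient:
  "pabs x \<le> pabs y \<longleftrightarrow> x = 0 \<or> (\<exists>w. x = w * y \<and> w \<in> val_ring ord)"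
proof (cases "x = 0 \<or> y = 0")
  case True then show ?thesis using pabs_pos[of x] by auto
next
  case False
  have "(\<exists>w. x = w * y \<and> w \<in> val_ring ord) \<longleftrightarrow> x / y \<in> val_ring ord"
  proof
    assume "\<exists>w. x = w * y \<and> w \<in> val_ring ord"
    then show "x / y \<in> val_ring ord" using False by auto
  next
    assume "x / y \<in> val_ring ord"
    then show "\<exists>w. x = w * y \<and> w \<in> val_ring ord" using False by (intro exI[of _ "x / y"]) simp
  qed
  also have "\<dots> \<longleftrightarrow> pabs x \<le> pabs y"
    using False pabs_pos[of y] by (simp flip: pabs_le_1_iff add: pabs_div divide_le_eq_1)
  finally show ?thesis using False by simp
qed

lemma definable_pred_pabs_le: "definable_pred an ord q (\<lambda>e. pabs (e 0) \<le> pabs (e 1))"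
proof -
  obtain \<pi> :: 'k where \<pi>: "\<pi> \<noteq> 0" "ord \<pi> = 1" using uniformizer_exists by blast
  obtain n :: nat where n: "n = 2 \<and> ord (2::'k) = 0 \<or> n = 3 \<and> ord (3::'k) = 0"
    using ord_2_or_ord_3 by blast
  define \<phi> :: "'k fml" where "\<phi> = FOr (FEq (Var 0) (Cst 0))
     (FEx 2 (FAnd (FEq (Var 0) (Mul (Var 2) (Var 1)))
        (FEx 3 (FEq (trm_pow (Var 3) n) (Add (Cst 1) (Mul (Cst \<pi>) (trm_pow (Var 2) n)))))))"
  have "sat ord q e \<phi> \<longleftrightarrow> e 0 = 0 \<or> (\<exists>w. e 0 = w * e 1 \<and> (\<exists>y. y ^ n = 1 + \<pi> * w ^ n))" for e
    by (simp add: \<phi>_def)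
  then have "sat ord q e \<phi> \<longleftrightarrow> pabs (e 0) \<le> pabs (e 1)" for e
    by (simp add: val_ring_iff_root[OF \<pi> n] pabs_le_iff_integral_quotient)
  moreover have "wf_fml an ord q \<phi>" by (simp add: \<phi>_def)
  ultimately show ?thesis unfolding definable_pred_def by blast
qed

abbreviation vdist where "vdist x y \<equiv> vec_abs ord q (vec_diff x y)"

lemma set_vec_diff_pabs:
  "length x = length y \<Longrightarrow> pabs ` set (vec_diff x y) = (\<lambda>l. pabs (x ! l - y ! l)) ` {..<length x}"
  by (auto simp: vec_diff_def set_zip image_iff)

lemma vdist_eq_Max:
  "length x = length y \<Longrightarrow> vdist x y = Max (insert 0 ((\<lambda>l. pabs (x ! l - y ! l)) ` {..<length x}))"
  by (simp add: vec_abs_def set_vec_diff_pabs)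

lemma vdist_nonneg: "vdist x y \<ge> 0"
  by (simp add: vec_abs_def)

lemma lipschitz_on_mono: "lipschitz_on ord q A g L \<Longrightarrow> L \<le> L' \<Longrightarrow> lipschitz_on ord q A g L'"
  unfolding lipschitz_on_def by (meson mult_right_mono order.trans vdist_nonneg)

lemma lipschitz_on_le:
  assumes "lipschitz_on ord q A g L" "a \<in> A" "b \<in> A" "vdist a b \<le> d" "0 \<le> L"
  shows "pabs (g a - g b) \<le> L * d"
proof -
  have "pabs (g a - g b) \<le> L * vdist a b" using assms(1-3) unfolding lipschitz_on_def by blast
  also have "\<dots> \<le> L * d" using assms(4,5) by (rule mult_left_mono)
  finally show ?thesis .
qed

lemma pabs_nth_le_vdist:
  "length x = length y \<Longrightarrow> l < length x \<Longrightarrow> pabs (x ! l - y ! l) \<le> vdist x y"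
  by (simp add: vdist_eq_Max)

lemma vdist_le:
  "length x = length y \<Longrightarrow> 0 \<le> M \<Longrightarrow> (\<And>l. l < length x \<Longrightarrow> pabs (x ! l - y ! l) \<le> M) \<Longrightarrow>
   vdist x y \<le> M"
  by (simp add: vdist_eq_Max)

lemma vdist_attained:
  "length x = length y \<Longrightarrow> length x > 0 \<Longrightarrow> \<exists>l<length x. vdist x y = pabs (x ! l - y ! l)"
proof -
  assume a: "length x = length y" "length x > 0"
  let ?A = "(\<lambda>l. pabs (x ! l - y ! l)) ` {..<length x}"
  have "Max (insert 0 ?A) \<in> insert 0 ?A" by (rule Max_in) auto
  moreover have "vdist x y = Max (insert 0 ?A)" using a by (simp add: vdist_eq_Max)
  moreover have "pabs (x ! 0 - y ! 0) \<le> vdist x y" using a by (intro pabs_nth_le_vdist) auto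
  ultimately show ?thesis using a pabs_nonneg[of "x ! 0 - y ! 0"]
    by (metis (no_types, lifting) antisym image_iff insert_iff lessThan_iff)
qed

lemma vdist_commute: "length x = length y \<Longrightarrow> vdist x y = vdist y x"
  by (simp add: vdist_eq_Max pabs_minus_commute)

lemma vdist_le_max:
  "length x = length y \<Longrightarrow> length y = length z \<Longrightarrow> vdist x z \<le> max (vdist x y) (vdist y z)"
proof (rule vdist_le)
  fix l assume a: "length x = length y" "length y = length z" "l < length x"
  have "pabs (x ! l - z ! l) \<le> max (pabs (x ! l - y ! l)) (pabs (y ! l - z ! l))"
    by (rule pabs_diff_le_max)
  also have "\<dots> \<le> max (vdist x y) (vdist y z)" using a by (intro max.mono pabs_nth_le_vdist) auto
  finally show "pabs (x ! l - z ! l) \<le> max (vdist x y) (vdist y z)" .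
qed (auto simp: vdist_nonneg le_max_iff_disj)

lemma vdist_le_if_near:
  assumes "length a' = length a" "length a = length b" "length b = length b'"
    and "vdist a a' \<le> d" "vdist b b' \<le> d" "vdist a b \<le> d"
  shows "vdist a' b' \<le> d"
proof -
  have "vdist a' b \<le> max (vdist a' a) (vdist a b)" using assms(1,2) by (rule vdist_le_max)
  also have "\<dots> \<le> d" using assms(4,6) vdist_commute[OF assms(1)] by simp
  finally have "vdist a' b \<le> d" .
  have "vdist a' b' \<le> max (vdist a' b) (vdist b b')" using assms(1-3) by (intro vdist_le_max) simp_all
  also have "\<dots> \<le> d" using \<open>vdist a' b \<le> d\<close> assms(5) by simp
  finally show ?thesis .
qed

lemma vdist_self: "vdist x x = 0"
  using vdist_le[of x x 0] vdist_nonneg[of x x] by simp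

lemma vdist_le_0_imp_eq: "length x = length y \<Longrightarrow> vdist x y \<le> 0 \<Longrightarrow> x = y"
proof (rule nth_equalityI)
  fix l assume a: "length x = length y" "vdist x y \<le> 0" "l < length x"
  then have "pabs (x ! l - y ! l) \<le> 0" using pabs_nth_le_vdist[of x y l] by simp
  then show "x ! l = y ! l" using pabs_nonneg[of "x ! l - y ! l"] by simp
qed

lemma vdist_isosceles:
  "length x = length y \<Longrightarrow> length y = length z \<Longrightarrow> vdist x y < vdist x z \<Longrightarrow> vdist y z = vdist x z"
proof -
  assume a: "length x = length y" "length y = length z" "vdist x y < vdist x z"
  have "vdist y z \<le> max (vdist y x) (vdist x z)" using a by (intro vdist_le_max) auto
  moreover have "vdist x z \<le> max (vdist x y) (vdist y z)" using a by (intro vdist_le_max) auto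
  ultimately show ?thesis using a vdist_commute[of x y] by (auto simp: max_def split: if_splits)
qed

lemma vdist_le_vdist_iff: "length x = r \<Longrightarrow> length y = r \<Longrightarrow> length z = r \<Longrightarrow>
  (vdist x y \<le> vdist x z) = (\<forall>l<r. \<exists>l'<r. pabs (x ! l - y ! l) \<le> pabs (x ! l' - z ! l'))"
proof (cases "r = 0")
  case True
  assume "length x = r" "length y = r" "length z = r"
  then show ?thesis using True by (simp add: vec_diff_def vec_abs_def)
next
  case False
  assume a: "length x = r" "length y = r" "length z = r"
  show ?thesis
  proof
    assume h: "vdist x y \<le> vdist x z"
    obtain l' where "l' < r" "vdist x z = pabs (x ! l' - z ! l')"
      using vdist_attained[of x z] a False by auto
    then show "\<forall>l<r. \<exists>l'<r. pabs (x ! l - y ! l) \<le> pabs (x ! l' - z ! l')"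
      using h a pabs_nth_le_vdist[of x y] by (metis order.trans)
  next
    assume h: "\<forall>l<r. \<exists>l'<r. pabs (x ! l - y ! l) \<le> pabs (x ! l' - z ! l')"
    show "vdist x y \<le> vdist x z"
    proof (rule vdist_le)
      fix l assume "l < length x"
      then obtain l' where "l' < r" "pabs (x ! l - y ! l) \<le> pabs (x ! l' - z ! l')"
        using h a by auto
      then show "pabs (x ! l - y ! l) \<le> vdist x z" using a pabs_nth_le_vdist[of x z l'] by auto
    qed (use a vdist_nonneg in auto)
  qed
qed

lemma definable_pred_pabs_diff_le:
  "definable_pred an ord q (\<lambda>e. pabs (e a - e b) \<le> pabs (e c - e d))"
proof -
  define s :: "nat \<Rightarrow> 'k trm" where "s i = (if i = 0 then Add (Var a) (Neg (Var b))
      else if i = 1 then Add (Var c) (Neg (Var d)) else Cst 0)" for i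
  have "definable_pred an ord q (\<lambda>e. (\<lambda>e. pabs (e 0) \<le> pabs (e 1)) (\<lambda>i. eval_trm ord q e (s i)))"
    by (rule definable_pred_subst[OF definable_pred_pabs_le, where N="Suc (a + b + c + d)"])
      (auto simp: s_def)
  then show ?thesis by (simp add: s_def)
qed

end

locale covering = p_adic ord q for ord :: "'k::field_char_0 \<Rightarrow> int" and q +
  fixes r k :: nat and Xs :: "nat \<Rightarrow> 'k list set"
  assumes Xs_subset_kspace: "\<And>i. i < k \<Longrightarrow> Xs i \<subseteq> kspace r" and k_ge_1: "k \<ge> 1"
begin

text \<open>\<open>nearer x i m\<close> says \<open>d(x, X\<^sub>i) \<le> d(x, X\<^sub>m)\<close>, phrased without infima, which need not
  be attained.\<close>

definition nearer :: "'k list \<Rightarrow> nat \<Rightarrow> nat \<Rightarrow> bool" where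
  "nearer x i m \<longleftrightarrow> (\<forall>z\<in>Xs m. \<exists>y\<in>Xs i. vdist x y \<le> vdist x z)"

definition nearest :: "'k list \<Rightarrow> nat \<Rightarrow> bool" where
  "nearest x i \<longleftrightarrow> (\<forall>m<k. nearer x i m)"

definition nearest_idx :: "'k list \<Rightarrow> nat" where
  "nearest_idx x = (LEAST i. i < k \<and> nearest x i)"

lemma nearer_trans: "nearer x i j \<Longrightarrow> nearer x j l \<Longrightarrow> nearer x i l"
  unfolding nearer_def by (meson order.trans)

lemma nearer_total: "nearer x i j \<or> nearer x j i"
  unfolding nearer_def by (meson linear order.trans)

lemma ex_nearer_than_all_less: "n \<ge> 1 \<Longrightarrow> \<exists>i<n. \<forall>m<n. nearer x i m"
proof (induction n rule: dec_induct)
  case base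
  then show ?case using nearer_total[of x 0 0] by auto
next
  case (step n)
  then obtain i where i: "i < n" "\<forall>m<n. nearer x i m" by blast
  show ?case
  proof (cases "nearer x i n")
    case True then show ?thesis using i by (auto simp: less_Suc_eq)
  next
    case False
    then have "nearer x n i" using nearer_total by blast
    then have "\<forall>m<n. nearer x n m" using i nearer_trans by blast
    moreover have "nearer x n n" using nearer_total[of x n n] by blast
    ultimately show ?thesis by (auto simp: less_Suc_eq)
  qed
qed

lemma nearest_idx: "nearest_idx x < k \<and> nearest x (nearest_idx x)"
proof -
  have "\<exists>i. i < k \<and> nearest x i"
    using ex_nearer_than_all_less[OF k_ge_1, of x] unfolding nearest_def by blast
  then show ?thesis unfolding nearest_idx_def by (rule LeastI_ex)
qed

lemma nearest_idx_eqI: "i < k \<Longrightarrow> nearest x i \<Longrightarrow> (\<forall>j<i. \<not> nearest x j) \<Longrightarrow> nearest_idx x = i"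
  unfolding nearest_idx_def by (rule Least_equality) (auto simp: not_less[symmetric])

lemma not_nearest_less_nearest_idx: "j < nearest_idx x \<Longrightarrow> \<not> nearest x j"
  using nearest_idx[of x] not_less_Least[of j "\<lambda>i. i < k \<and> nearest x i"]
  unfolding nearest_idx_def by simp

lemma mem_Xs_nearest_idx:
  assumes "m < k" "x \<in> Xs m"
  shows "x \<in> Xs (nearest_idx x)"
proof -
  have "nearer x (nearest_idx x) m" using nearest_idx[of x] assms by (auto simp: nearest_def)
  then obtain y where y: "y \<in> Xs (nearest_idx x)" "vdist x y \<le> vdist x x"
    using assms unfolding nearer_def by blast
  have "length x = r" "length y = r"
    using assms y Xs_subset_kspace nearest_idx[of x] by (auto simp: kspace_def)
  then have "x = y" using y vdist_self[of x] by (intro vdist_le_0_imp_eq) auto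
  then show ?thesis using y by simp
qed

text \<open>If \<open>X\<^sub>i\<^sub>(\<^sub>x\<^sub>)\<close> keeps away from \<open>x\<close> by more than \<open>|x - y|\<close>, then so do all \<open>X\<^sub>m\<close>,
  and by the isosceles property \<open>y\<close> sees every point of them at the same distance as \<open>x\<close>.\<close>

lemma nearest_idx_eq_if_far:
  assumes x: "x \<in> kspace r" and y: "y \<in> kspace r"
    and far: "\<forall>x'\<in>Xs (nearest_idx x). vdist x x' > vdist x y"
  shows "nearest_idx y = nearest_idx x"
proof -
  have same_dist: "vdist y z = vdist x z" if m: "m < k" and z: "z \<in> Xs m" for m z
  proof -
    have "nearer x (nearest_idx x) m" using nearest_idx[of x] m unfolding nearest_def by simp
    then obtain w where "w \<in> Xs (nearest_idx x)" "vdist x w \<le> vdist x z"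
      using z unfolding nearer_def by blast
    then have "vdist x y < vdist x z" using far by fastforce
    moreover have "length x = r" "length y = r" "length z = r"
      using x y m z Xs_subset_kspace by (auto simp: kspace_def)
    ultimately show ?thesis using vdist_isosceles[of x y z] by simp
  qed
  have "nearer y i m = nearer x i m" if "i < k" "m < k" for i m
    unfolding nearer_def using same_dist[OF that(1)] same_dist[OF that(2)] by simp
  then have "nearest y i = nearest x i" if "i < k" for i
    unfolding nearest_def using that by simp
  then have "(\<lambda>i. i < k \<and> nearest y i) = (\<lambda>i. i < k \<and> nearest x i)" by auto
  then show ?thesis unfolding nearest_idx_def by (rule arg_cong)
qed

lemma exists_near_point_if_nearest_idx_differs:
  assumes "x \<in> kspace r" "y \<in> kspace r" "nearest_idx x \<noteq> nearest_idx y"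
  shows "\<exists>x'\<in>Xs (nearest_idx x). vdist x x' \<le> vdist x y"
  using nearest_idx_eq_if_far[OF assms(1,2)] assms(3) by (metis not_le)

lemma lipschitz_on_glued:
  assumes L: "0 \<le> L"
    and ft_lip: "\<And>i. i < k \<Longrightarrow> lipschitz_on ord q (kspace r) (ft i) L"
    and f_lip: "lipschitz_on ord q (\<Union>i<k. Xs i) f L"
    and ft_eq: "\<And>i x. i < k \<Longrightarrow> x \<in> Xs i \<Longrightarrow> ft i x = f x"
  shows "lipschitz_on ord q (kspace r) (\<lambda>x. ft (nearest_idx x) x) L"
  unfolding lipschitz_on_def
proof (intro ballI)
  fix a b :: "'k list" assume a: "a \<in> kspace r" and b: "b \<in> kspace r"
  let ?i = "nearest_idx a" and ?j = "nearest_idx b" and ?d = "vdist a b"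
  have i: "?i < k" and j: "?j < k" using nearest_idx by auto
  show "pabs (ft ?i a - ft ?j b) \<le> L * ?d"
  proof (cases "?i = ?j")
    case True
    then show ?thesis using ft_lip[OF i] a b unfolding lipschitz_on_def by simp
  next
    case False
    obtain a' where a': "a' \<in> Xs ?i" "vdist a a' \<le> ?d"
      using exists_near_point_if_nearest_idx_differs[OF a b False] by blast
    have "?d = vdist b a" using a b vdist_commute by (simp add: kspace_def)
    then obtain b' where b': "b' \<in> Xs ?j" "vdist b b' \<le> ?d"
      using exists_near_point_if_nearest_idx_differs[OF b a] False by auto
    have a'_kspace: "a' \<in> kspace r" and b'_kspace: "b' \<in> kspace r"
      using a' b' i j Xs_subset_kspace by auto
    have "vdist a' b' \<le> ?d"
      using a'_kspace b'_kspace a b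
      by (intro vdist_le_if_near[OF _ _ _ a'(2) b'(2) order.refl]) (simp_all add: kspace_def)
    moreover have "a' \<in> (\<Union>i<k. Xs i)" "b' \<in> (\<Union>i<k. Xs i)" using a'(1) b'(1) i j by auto
    ultimately have "pabs (f a' - f b') \<le> L * ?d"
      using lipschitz_on_le[OF f_lip _ _ _ L] by blast
    moreover have "pabs (ft ?i a - f a') \<le> L * ?d"
      using lipschitz_on_le[OF ft_lip[OF i] a a'_kspace a'(2) L] ft_eq[OF i a'(1)] by simp
    moreover have "pabs (f b' - ft ?j b) \<le> L * ?d"
      using lipschitz_on_le[OF ft_lip[OF j] b b'_kspace b'(2) L] ft_eq[OF j b'(1)]
      by (simp add: pabs_minus_commute)
    moreover have "ft ?i a - ft ?j b = (ft ?i a - f a') + (f a' - f b') + (f b' - ft ?j b)"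
      by simp
    ultimately show ?thesis by (simp only:) (intro pabs_add_le)
  qed
qed

lemma nearer_iff_coordinates:
  assumes x: "length x = r" and i: "i < k" and m: "m < k"
  shows "nearer x i m \<longleftrightarrow> (\<forall>zs. length zs = r \<longrightarrow> zs \<in> Xs m \<longrightarrow>
    (\<exists>ys. length ys = r \<and> ys \<in> Xs i \<and> (\<forall>l<r. \<exists>l'<r. pabs (x ! l - ys ! l) \<le> pabs (x ! l' - zs ! l'))))"
proof -
  have len: "\<And>y. y \<in> Xs i \<Longrightarrow> length y = r" "\<And>z. z \<in> Xs m \<Longrightarrow> length z = r"
    using Xs_subset_kspace i m by (auto simp: kspace_def)
  have "nearer x i m \<longleftrightarrow> (\<forall>zs\<in>Xs m. \<exists>ys\<in>Xs i.
      \<forall>l<r. \<exists>l'<r. pabs (x ! l - ys ! l) \<le> pabs (x ! l' - zs ! l'))"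
    unfolding nearer_def by (intro ball_cong bex_cong refl vdist_le_vdist_iff[OF x] len)
  then show ?thesis using len by blast
qed

text \<open>In the formula for \<open>nearer x i m\<close>, \<open>x\<close> occupies variables \<open>0..<r\<close>, the point of
  \<open>X\<^sub>m\<close> variables \<open>r..<2r\<close> and the point of \<open>X\<^sub>i\<close> variables \<open>2r..<3r\<close>.\<close>

lemma definable_pred_nearer:
  assumes Xs_def: "\<And>i. i < k \<Longrightarrow> definable_set an ord q r (Xs i)" and i: "i < k" and m: "m < k"
  shows "definable_pred an ord q (\<lambda>e. nearer (env_block e 0 r) i m)"
proof -
  define close where "close e \<longleftrightarrow> env_block e (2 * r) r \<in> Xs i \<and>
      (\<forall>l<r. \<exists>l'<r. pabs (e l - e (2 * r + l)) \<le> pabs (e l' - e (r + l')))" for e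
  define has_closer where "has_closer e \<longleftrightarrow> (\<exists>ys. length ys = r \<and> close (upd_block e (2 * r) ys))" for e
  define P where "P e \<longleftrightarrow>
      (\<forall>zs. length zs = r \<longrightarrow> env_block (upd_block e r zs) r r \<in> Xs m \<longrightarrow> has_closer (upd_block e r zs))"
    for e
  have "definable_pred an ord q close" unfolding close_def
    by (intro definable_pred_conj definable_pred_env_block_mem Xs_def i definable_pred_all_less
        definable_pred_ex_less definable_pred_pabs_diff_le)
  then have "definable_pred an ord q has_closer"
    unfolding has_closer_def by (rule definable_pred_ex_block)
  then have "definable_pred an ord q (\<lambda>e. env_block e r r \<in> Xs m \<longrightarrow> has_closer e)"
    by (intro definable_pred_imp definable_pred_env_block_mem Xs_def m)
  then have "definable_pred an ord q P"
    unfolding P_def by (rule definable_pred_all_block)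
  moreover have "P e = nearer (env_block e 0 r) i m" for e
  proof -
    have "close (upd_block (upd_block e r zs) (2 * r) ys) \<longleftrightarrow> ys \<in> Xs i \<and>
        (\<forall>l<r. \<exists>l'<r. pabs (env_block e 0 r ! l - ys ! l) \<le> pabs (env_block e 0 r ! l' - zs ! l'))"
      if "length zs = r" "length ys = r" for zs ys
      using that by (simp add: close_def env_block_upd_block upd_block_def cong: conj_cong)
    then show ?thesis
      by (simp add: P_def has_closer_def env_block_upd_block nearer_iff_coordinates i m
          cong: conj_cong)
  qed
  ultimately show ?thesis by (rule definable_pred_cong)
qed

lemma definable_pred_nearest:
  assumes "\<And>i. i < k \<Longrightarrow> definable_set an ord q r (Xs i)" and "i < k"
  shows "definable_pred an ord q (\<lambda>e. nearest (env_block e 0 r) i)"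
  unfolding nearest_def using assms by (intro definable_pred_all_less definable_pred_nearer)

lemma ex_first_nearest_iff:
  "(\<exists>i<k. nearest x i \<and> (\<forall>j<i. \<not> nearest x j) \<and> P i) \<longleftrightarrow> P (nearest_idx x)"
proof
  assume "\<exists>i<k. nearest x i \<and> (\<forall>j<i. \<not> nearest x j) \<and> P i"
  then obtain i where "i < k" "nearest x i" "\<forall>j<i. \<not> nearest x j" "P i" by blast
  then show "P (nearest_idx x)" using nearest_idx_eqI by simp
next
  assume "P (nearest_idx x)"
  then show "\<exists>i<k. nearest x i \<and> (\<forall>j<i. \<not> nearest x j) \<and> P i"
    using nearest_idx not_nearest_less_nearest_idx by blast
qed

lemma definable_fun_glued:
  assumes Xs_def: "\<And>i. i < k \<Longrightarrow> definable_set an ord q r (Xs i)"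
    and ft_def: "\<And>i. i < k \<Longrightarrow> definable_fun an ord q r (kspace r) (ft i)"
  shows "definable_fun an ord q r (kspace r) (\<lambda>x. ft (nearest_idx x) x)"
proof -
  have "definable_pred an ord q (\<lambda>e. \<exists>i<k. nearest (env_block e 0 r) i \<and>
      (\<forall>j<i. \<not> nearest (env_block e 0 r) j) \<and> env_block e 0 (Suc r) \<in> (\<lambda>xs. xs @ [ft i xs]) ` kspace r)"
    using ft_def unfolding definable_fun_def
    by (intro definable_pred_ex_less definable_pred_conj definable_pred_nearest Xs_def
        definable_pred_all_less definable_pred_not definable_pred_env_block_mem) auto
  moreover have "env_block e 0 (Suc r) \<in> (\<lambda>xs. xs @ [ft i xs]) ` kspace r \<longleftrightarrow>
      e r = ft i (env_block e 0 r)" for e i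
    by (auto simp: env_block_Suc kspace_def)
  ultimately have "definable_pred an ord q (\<lambda>e. e r = ft (nearest_idx (env_block e 0 r)) (env_block e 0 r))"
    by (elim definable_pred_cong) (simp add: ex_first_nearest_iff)
  then show ?thesis
    unfolding definable_fun_def by (simp add: definable_set_kspace definable_set_graph)
qed

end

theorem mainTheorem2:
  fixes an :: bool
    and ord :: "'k::field_char_0 \<Rightarrow> int" and q :: nat
    and r :: nat and X :: "'k list set" and lam :: real and f :: "'k list \<Rightarrow> 'k"
    and k :: nat and Xs :: "nat \<Rightarrow> 'k list set" and Lam :: "nat \<Rightarrow> real"
    and ft :: "nat \<Rightarrow> 'k list \<Rightarrow> 'k"
  assumes "p_adic_field ord q"
    and "X \<subseteq> kspace r"
    and "definable_set an ord q r X"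
    and "lam > 0"
    and "definable_fun an ord q r X f"
    and "lipschitz_on ord q X f lam"
    and "k \<ge> 1"
    and "X = (\<Union>i\<in>{..<k}. Xs i)"
    and "\<And>i. i < k \<Longrightarrow> definable_set an ord q r (Xs i)"
    and "\<And>i. i < k \<Longrightarrow> Lam i \<ge> lam"
    and "\<And>i. i < k \<Longrightarrow> definable_fun an ord q r (kspace r) (ft i)"
    and "\<And>i. i < k \<Longrightarrow> lipschitz_on ord q (kspace r) (ft i) (Lam i)"
    and "\<And>i x. i < k \<Longrightarrow> x \<in> Xs i \<Longrightarrow> ft i x = f x"
  shows "\<exists>F. definable_fun an ord q r (kspace r) F
           \<and> lipschitz_on ord q (kspace r) F (Max (Lam ` {..<k}))
           \<and> (\<forall>x\<in>X. F x = f x)"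
proof -
  interpret p_adic ord q by unfold_locales (rule assms(1))
  interpret covering ord q r k Xs
    using assms(7,9) by unfold_locales (auto simp: definable_set_def)
  define L where "L = Max (Lam ` {..<k})"
  have Lam_le: "Lam i \<le> L" if "i < k" for i
    unfolding L_def using that by (intro Max_ge) auto
  have lam_le: "lam \<le> L" using assms(7,10) Lam_le[of 0] by force
  have "lipschitz_on ord q (kspace r) (\<lambda>x. ft (nearest_idx x) x) L"
  proof (rule lipschitz_on_glued)
    show "lipschitz_on ord q (kspace r) (ft i) L" if "i < k" for i
      using assms(12)[OF that] Lam_le[OF that] by (rule lipschitz_on_mono)
    show "lipschitz_on ord q (\<Union>i<k. Xs i) f L"
      using assms(6,8) lam_le by (auto intro: lipschitz_on_mono)
  qed (use assms(4,13) lam_le in auto)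
  moreover have "ft (nearest_idx x) x = f x" if "x \<in> X" for x
    using that assms(8,13) mem_Xs_nearest_idx nearest_idx by blast
  moreover have "definable_fun an ord q r (kspace r) (\<lambda>x. ft (nearest_idx x) x)"
    using assms(9,11) by (rule definable_fun_glued)
  ultimately show ?thesis unfolding L_def by blast
qed

end
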